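(* Let $K\ge 1$ and let $\mathcal A_\theta$ be an $L$-layer MinAgg GNN. If $h^{(L)}_{v_K}(H^{(0)}_K)\ne h^{(L)}_{u_K}(H^{(0)}_K)$, then $\mathcal A_\theta$ has at least $K$ edge-dependent message passing layers.
   Context: Attributed graphs: $G=(V,E,X_{\mathrm v},X_{\mathrm e})$ with $V$ finite, undirected edges, nonnegative edge weights and nonnegative node features; every node has a self-loop of weight $x_{(v,v)}=0$ and $\mathcal N(v)=\{v\}\cup\{u:\{u,v\}\in E\}$. A large constant $\beta>0$ encodes "infinite distance". The graph $H^{(0)}_K$: vertices $v_0,\dots,v_K,u_0,\dots,u_K$; edges $\{v_{i-1},v_i\}$, $\{u_{i-1},u_i\}$, $\{u_{i-1},v_i\}$, $\{v_{i-1},u_i\}$ for $i\in[K]$; weights $1$ on the edges $\{u_{i-1},v_i\}$ and $\{v_{i-1},u_i\}$ and $0$ on the edges $\{v_{i-1},v_i\}$, $\{u_{i-1},u_i\}$; node features $x_{v_0}=0$ and $x_w=\beta$ for all other $w$. An $m$-layer ReLU MLP computes $x^{(0)}=x$, $x^{(j)}=\sigma(W_jx^{(j-1)}+b_j)$ ($j\in[m]$), output $x^{(m)}$, $\sigma$ componentwise ReLU. MinAgg GNN: for each $\ell\in[L]$, ReLU MLPs $f^{\mathrm{agg},(\ell)}:\mathbb R^{d_{\ell-1}+1}\to\mathbb R^d$ and $f^{\mathrm{up},(\ell)}:\mathbb R^{d+d_{\ell-1}}\to\mathbb R^{d_\ell}$, $d_0=d_L=1$, $d_\ell=d$ otherwise;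 $h^{(0)}_v=x_v$ and $h^{(\ell)}_v=f^{\mathrm{up},(\ell)}\big(\min_{u\in\mathcal N(v)}f^{\mathrm{agg},(\ell)}(h^{(\ell-1)}_u\oplus x_{(u,v)})\oplus h^{(\ell-1)}_v\big)$ (coordinatewise min, $\oplus$ concatenation). The first $d_{\ell-1}$ input coordinates of $f^{\mathrm{agg},(\ell)}$ are its node component, the last its edge component. A function $f$ on $\mathbb R^n_{\ge0}$ depends on a set $S$ of coordinates if there are $x\ne y$ in $\mathbb R^n_{\ge 0}$ agreeing outside $S$ with $f(x)\neq f(y)$. Layer $\ell$ is message passing if $f^{\mathrm{agg},(\ell)}$ depends on its node component, and edge-dependent message passing if moreover $f^{\mathrm{agg},(\ell)}$ depends on its edge component. *)

theory Defs
  imports "HOL-Analysis.Analysis"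
begin

text \<open>An affine+ReLU layer is a pair (W, b): W a list of rows (output dim = length W),
  each row of length = input dim; b the bias vector.\<close>

definition relu_layer :: "real list list \<Rightarrow> real list \<Rightarrow> real list \<Rightarrow> real list" where
  "relu_layer W b x = map2 (\<lambda>row bi. max 0 (sum_list (map2 (*) row x) + bi)) W b"

type_synonym mlp = "(real list list \<times> real list) list"

definition mlp_apply :: "mlp \<Rightarrow> real list \<Rightarrow> real list" where
  "mlp_apply F x = foldl (\<lambda>y (W, b). relu_layer W b y) x F"

fun mlp_dims :: "nat \<Rightarrow> mlp \<Rightarrow> nat \<Rightarrow> bool" where
  "mlp_dims n [] m = (n = m)"
| "mlp_dims n ((W, b) # Ls) m =
     (length b = length W \<and> (\<forall>r\<in>set W. length r = n) \<and> mlp_dims (length W) Ls m)"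

definition is_mlp :: "nat \<Rightarrow> nat \<Rightarrow> mlp \<Rightarrow> bool" where
  "is_mlp n m F \<longleftrightarrow> F \<noteq> [] \<and> mlp_dims n F m"

definition depends_on :: "nat \<Rightarrow> (real list \<Rightarrow> real list) \<Rightarrow> nat set \<Rightarrow> bool" where
  "depends_on n f S \<longleftrightarrow>
     (\<exists>x y. length x = n \<and> length y = n \<and> (\<forall>i<n. 0 \<le> x ! i \<and> 0 \<le> y ! i) \<and> x \<noteq> y \<and>
            (\<forall>i<n. i \<notin> S \<longrightarrow> x ! i = y ! i) \<and> f x \<noteq> f y)"

text \<open>A GNN is given by hidden width d and a list of layers (f_agg, f_up); L = length.
  Dimensions: d_0 = d_L = 1, d_l = d otherwise.\<close>

type_synonym gnn = "(mlp \<times> mlp) list"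

definition gdim :: "nat \<Rightarrow> nat \<Rightarrow> nat \<Rightarrow> nat" where
  "gdim d L l = (if l = 0 \<or> l = L then 1 else d)"

definition is_minagg_gnn :: "nat \<Rightarrow> gnn \<Rightarrow> bool" where
  "is_minagg_gnn d A \<longleftrightarrow>
     (\<forall>l\<in>{1..length A}.
        is_mlp (gdim d (length A) (l - 1) + 1) d (fst (A ! (l - 1))) \<and>
        is_mlp (d + gdim d (length A) (l - 1)) (gdim d (length A) l) (snd (A ! (l - 1))))"

definition cw_min :: "nat \<Rightarrow> real list set \<Rightarrow> real list" where
  "cw_min d S = map (\<lambda>i. Min ((\<lambda>z. z ! i) ` S)) [0..<d]"

text \<open>Node embeddings h^(l)_v of a graph given by closed neighbourhoods N (including v),
  edge weights ew u v = x_(u,v) and node features x.\<close>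
fun gnn_h :: "nat \<Rightarrow> gnn \<Rightarrow> ('v \<Rightarrow> 'v set) \<Rightarrow> ('v \<Rightarrow> 'v \<Rightarrow> real) \<Rightarrow> ('v \<Rightarrow> real)
              \<Rightarrow> nat \<Rightarrow> 'v \<Rightarrow> real list" where
  "gnn_h d A N ew x 0 v = [x v]"
| "gnn_h d A N ew x (Suc l) v =
     mlp_apply (snd (A ! l))
       (cw_min d ((\<lambda>u. mlp_apply (fst (A ! l)) (gnn_h d A N ew x l u @ [ew u v])) ` N v)
        @ gnn_h d A N ew x l v)"

text \<open>Layer l (1-based) is message passing / edge-dependent message passing.
  The input of f_agg^(l) has dimension d_(l-1)+1; node component = first d_(l-1)
  coordinates, edge component = the last one.\<close>
definition message_passing_layer :: "nat \<Rightarrow> gnn \<Rightarrow> nat \<Rightarrow> bool" where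
  "message_passing_layer d A l \<longleftrightarrow>
     (let n = gdim d (length A) (l - 1)
      in depends_on (n + 1) (mlp_apply (fst (A ! (l - 1)))) {0..<n})"

definition edge_dep_layer :: "nat \<Rightarrow> gnn \<Rightarrow> nat \<Rightarrow> bool" where
  "edge_dep_layer d A l \<longleftrightarrow>
     message_passing_layer d A l \<and>
     (let n = gdim d (length A) (l - 1)
      in depends_on (n + 1) (mlp_apply (fst (A ! (l - 1)))) {n})"

text \<open>Vertex (i, False) is v_i, vertex (i, True) is u_i, for i \<le> K.\<close>

definition HK_nbrs :: "nat \<Rightarrow> nat \<times> bool \<Rightarrow> (nat \<times> bool) set" where
  "HK_nbrs K w = insert w {(j, c). j \<le> K \<and> (j + 1 = fst w \<or> fst w + 1 = j)}"

definition HK_weight :: "nat \<times> bool \<Rightarrow> nat \<times> bool \<Rightarrow> real" where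
  "HK_weight u w = (if snd u = snd w then 0 else 1)"

definition HK_feat :: "real \<Rightarrow> nat \<times> bool \<Rightarrow> real" where
  "HK_feat \<beta> w = (if w = (0, False) then 0 else \<beta>)"

end

theory Submission
  imports Defs
begin

text \<open>Flipping every vertex v_j \<leftrightarrow> u_j is an automorphism of H_K that preserves all weights,
  and v_i, u_i have the same neighbours apart from themselves. Call v_i and u_i twins at layer l
  if their embeddings agree. Before any layer, all pairs except (v_0, u_0) are twins. A layer
  preserves twinship of (v_i, u_i) as soon as all neighbours of v_i are twins; a layer that
  ignores node embeddings sees only the flip-invariant edge weights, and one that ignores edge
  weights sees only the twin itself among the non-common neighbours. Hence only an
  edge-dependent message passing layer can push the first non-twin index up, by one each time,
  and separating v_K from u_K requires K of them.\<close>

lemma length_mlp_apply: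
  "mlp_dims n F m \<Longrightarrow> length x = n \<Longrightarrow> length (mlp_apply F x) = m"
proof (induction F arbitrary: n x)
  case Nil
  then show ?case by (simp add: mlp_apply_def)
next
  case (Cons L Ls)
  obtain W b where L: "L = (W, b)" by (cases L)
  have "mlp_apply (L # Ls) x = mlp_apply Ls (relu_layer W b x)"
    by (simp add: mlp_apply_def L)
  moreover have "length (relu_layer W b x) = length W"
    using Cons.prems L by (simp add: relu_layer_def)
  ultimately show ?case
    using Cons L by (metis mlp_dims.simps(2))
qed

lemma mlp_apply_nonneg: "F \<noteq> [] \<Longrightarrow> z \<in> set (mlp_apply F x) \<Longrightarrow> 0 \<le> z"
proof (induction F rule: rev_induct)
  case Nil
  then show ?case by simp
next
  case (snoc L Ls)
  obtain W b where L: "L = (W, b)" by (cases L)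
  have "mlp_apply (Ls @ [L]) x = relu_layer W b (mlp_apply Ls x)"
    by (simp add: mlp_apply_def L)
  with snoc.prems show ?case
    by (auto simp: relu_layer_def set_zip)
qed

lemma gnn_h_length_nonneg:
  assumes "is_minagg_gnn d A" and "\<And>v. 0 \<le> x v" and "l \<le> length A"
  shows "length (gnn_h d A N ew x l v) = gdim d (length A) l \<and> (\<forall>z\<in>set (gnn_h d A N ew x l v). 0 \<le> z)"
  using assms(3)
proof (induction l arbitrary: v)
  case 0
  then show ?case using assms(2) by (simp add: gdim_def)
next
  case (Suc l)
  have "Suc l \<in> {1..length A}"
    using Suc.prems by simp
  then have "is_mlp (d + gdim d (length A) l) (gdim d (length A) (Suc l)) (snd (A ! l))"
    using assms(1) unfolding is_minagg_gnn_def by fastforce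
  moreover have "length (gnn_h d A N ew x l v) = gdim d (length A) l"
    using Suc by simp
  ultimately show ?case
    by (auto simp: is_mlp_def cw_min_def intro!: length_mlp_apply dest: mlp_apply_nonneg)
qed

lemma nonneg_append_nth:
  "\<forall>z\<in>set x. 0 \<le> (z::real) \<Longrightarrow> 0 \<le> e \<Longrightarrow> i < length x + 1 \<Longrightarrow> 0 \<le> (x @ [e]) ! i"
  by (cases "i < length x") (auto simp: nth_append)

lemma not_depends_on_front:
  assumes "\<not> depends_on (n + 1) f {0..<n}"
    and "length x = n" "length y = n" "\<forall>z\<in>set x. 0 \<le> z" "\<forall>z\<in>set y. 0 \<le> z" "0 \<le> e"
  shows "f (x @ [e]) = f (y @ [e])"
proof (rule ccontr)
  assume "f (x @ [e]) \<noteq> f (y @ [e])"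
  then have "depends_on (n + 1) f {0..<n}"
    unfolding depends_on_def using assms(2-)
    by (intro exI[of _ "x @ [e]"] exI[of _ "y @ [e]"]) (auto simp: nth_append intro!: nonneg_append_nth)
  with assms(1) show False ..
qed

lemma not_depends_on_last:
  assumes "\<not> depends_on (n + 1) f {n}"
    and "length x = n" "\<forall>z\<in>set x. 0 \<le> z" "0 \<le> e" "0 \<le> e'"
  shows "f (x @ [e]) = f (x @ [e'])"
proof (rule ccontr)
  assume "f (x @ [e]) \<noteq> f (x @ [e'])"
  then have "depends_on (n + 1) f {n}"
    unfolding depends_on_def using assms(2-)
    by (intro exI[of _ "x @ [e]"] exI[of _ "x @ [e']"]) (auto simp: nth_append intro!: nonneg_append_nth)
  with assms(1) show False ..
qed

definition HK_flip :: "nat \<times> bool \<Rightarrow> nat \<times> bool" where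
  "HK_flip w = (fst w, \<not> snd w)"

lemma HK_flip_nbrs: "HK_flip ` HK_nbrs K (i, False) = HK_nbrs K (i, True)"
  unfolding HK_nbrs_def HK_flip_def by (auto simp: image_iff)

lemma HK_weight_flip: "HK_weight (HK_flip u) (HK_flip w) = HK_weight u w"
  by (auto simp: HK_weight_def HK_flip_def)

lemma HK_swap_self_nbrs:
  "(\<lambda>u. if u = (i, False) then (i, True) else u) ` HK_nbrs K (i, False) = HK_nbrs K (i, True)"
  unfolding HK_nbrs_def by (auto simp: image_iff)

lemma HK_weight_nonneg: "0 \<le> HK_weight u w"
  by (simp add: HK_weight_def)

definition HK_messages ::
  "nat \<Rightarrow> (real list \<Rightarrow> real list) \<Rightarrow> (nat \<times> bool \<Rightarrow> real list) \<Rightarrow> nat \<times> bool \<Rightarrow> real list set" where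
  "HK_messages K agg H w = (\<lambda>u. agg (H u @ [HK_weight u w])) ` HK_nbrs K w"

lemma image_eq_via:
  "\<phi> ` X = Y \<Longrightarrow> (\<And>u. u \<in> X \<Longrightarrow> f u = g (\<phi> u)) \<Longrightarrow> f ` X = g ` Y"
  by (metis (no_types, lifting) image_cong image_image)

lemma HK_messages_eq_if_nbrs_twins:
  assumes "\<And>j. i \<le> Suc j \<Longrightarrow> H (j, False) = H (j, True)"
  shows "HK_messages K agg H (i, False) = HK_messages K agg H (i, True)"
  unfolding HK_messages_def
proof (rule image_eq_via[OF HK_flip_nbrs])
  fix u assume "u \<in> HK_nbrs K (i, False)"
  then have "i \<le> Suc (fst u)"
    unfolding HK_nbrs_def by auto
  then have "H u = H (HK_flip u)"
    using assms by (cases u) (auto simp: HK_flip_def, metis (full_types))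
  moreover have "HK_weight (HK_flip u) (i, True) = HK_weight u (i, False)"
    using HK_weight_flip[of u "(i, False)"] by (simp add: HK_flip_def)
  ultimately show "agg (H u @ [HK_weight u (i, False)]) =
      (\<lambda>u. agg (H u @ [HK_weight u (i, True)])) (HK_flip u)"
    by simp
qed

lemma HK_messages_eq_if_node_indep:
  assumes "\<not> depends_on (n + 1) agg {0..<n}"
    and "\<And>v. length (H v) = n \<and> (\<forall>z\<in>set (H v). 0 \<le> z)"
  shows "HK_messages K agg H (i, False) = HK_messages K agg H (i, True)"
  unfolding HK_messages_def
proof (rule image_eq_via[OF HK_flip_nbrs])
  fix u
  have "agg (H u @ [HK_weight u (i, False)]) = agg (H (HK_flip u) @ [HK_weight u (i, False)])"
    using not_depends_on_front[OF assms(1)] assms(2) HK_weight_nonneg by blast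
  then show "agg (H u @ [HK_weight u (i, False)]) =
      (\<lambda>u. agg (H u @ [HK_weight u (i, True)])) (HK_flip u)"
    using HK_weight_flip[of u "(i, False)"] by (simp add: HK_flip_def)
qed

lemma HK_messages_eq_if_edge_indep:
  assumes "\<not> depends_on (n + 1) agg {n}"
    and "\<And>v. length (H v) = n \<and> (\<forall>z\<in>set (H v). 0 \<le> z)"
    and "H (i, False) = H (i, True)"
  shows "HK_messages K agg H (i, False) = HK_messages K agg H (i, True)"
  unfolding HK_messages_def
proof (rule image_eq_via[OF HK_swap_self_nbrs])
  fix u
  have "\<And>e e'. 0 \<le> e \<Longrightarrow> 0 \<le> e' \<Longrightarrow> agg (H u @ [e]) = agg (H u @ [e'])"
    using not_depends_on_last[OF assms(1)] assms(2) by blast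
  then show "agg (H u @ [HK_weight u (i, False)]) =
      (\<lambda>u. agg (H u @ [HK_weight u (i, True)])) (if u = (i, False) then (i, True) else u)"
    using assms(3) HK_weight_nonneg by (simp add: HK_weight_def)
qed

lemma card_filter_atLeastAtMost_Suc:
  "card {k \<in> {1..Suc l}. P k} = card {k \<in> {1..l}. P k} + (if P (Suc l) then 1 else 0)"
proof -
  have "{k \<in> {1..Suc l}. P k} = {k \<in> {1..l}. P k} \<union> (if P (Suc l) then {Suc l} else {})"
    by (auto simp: le_Suc_eq)
  then show ?thesis by auto
qed

lemma HK_twins_beyond_edge_dep_count:
  assumes "is_minagg_gnn d A" and "\<beta> > 0"
  shows "l \<le> length A \<Longrightarrow> card {k \<in> {1..l}. edge_dep_layer d A k} < i \<Longrightarrow>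
    gnn_h d A (HK_nbrs K) HK_weight (HK_feat \<beta>) l (i, False) =
    gnn_h d A (HK_nbrs K) HK_weight (HK_feat \<beta>) l (i, True)"
proof (induction l arbitrary: i)
  case 0
  then show ?case by (simp add: HK_feat_def)
next
  case (Suc l)
  define H where "H = gnn_h d A (HK_nbrs K) HK_weight (HK_feat \<beta>) l"
  define agg where "agg = mlp_apply (fst (A ! l))"
  define n where "n = gdim d (length A) l"
  let ?c = "card {k \<in> {1..l}. edge_dep_layer d A k}"
  have count: "card {k \<in> {1..Suc l}. edge_dep_layer d A k} =
      ?c + (if edge_dep_layer d A (Suc l) then 1 else 0)"
    by (rule card_filter_atLeastAtMost_Suc)
  have twins: "\<And>j. ?c < j \<Longrightarrow> H (j, False) = H (j, True)"
    using Suc.IH Suc.prems(1) unfolding H_def by simp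
  have wf: "\<And>v. length (H v) = n \<and> (\<forall>z\<in>set (H v). 0 \<le> z)"
    unfolding H_def n_def using Suc.prems(1) assms
    by (intro gnn_h_length_nonneg) (auto simp: HK_feat_def)
  have self: "H (i, False) = H (i, True)"
    using twins Suc.prems(2) count by simp
  have "HK_messages K agg H (i, False) = HK_messages K agg H (i, True)"
  proof (cases "edge_dep_layer d A (Suc l)")
    case True
    then show ?thesis
      using Suc.prems(2) count by (intro HK_messages_eq_if_nbrs_twins twins) simp
  next
    case False
    then consider "\<not> depends_on (n + 1) agg {0..<n}" | "\<not> depends_on (n + 1) agg {n}"
      unfolding edge_dep_layer_def message_passing_layer_def agg_def n_def Let_def by auto
    then show ?thesis
      using HK_messages_eq_if_node_indep HK_messages_eq_if_edge_indep wf self by cases blast+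
  qed
  then show ?case
    using self unfolding H_def agg_def HK_messages_def by simp
qed

theorem mainTheorem7:
  fixes K d :: nat and A :: gnn and \<beta> :: real
  assumes "K \<ge> 1" and "\<beta> > 0"
    and "is_minagg_gnn d A"
    and "gnn_h d A (HK_nbrs K) HK_weight (HK_feat \<beta>) (length A) (K, False)
         \<noteq> gnn_h d A (HK_nbrs K) HK_weight (HK_feat \<beta>) (length A) (K, True)"
  shows "card {l \<in> {1..length A}. edge_dep_layer d A l} \<ge> K"
  using HK_twins_beyond_edge_dep_count[OF assms(3) assms(2), of "length A" K K] assms(4)
  by force

end
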